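(* Let $c_{\mathrm{rew}},c_{\mathrm{ver}}>0$, $c_{\min}=\min\{c_{\mathrm{rew}},c_{\mathrm{ver}}\}$, and for integers $s\ge0$ let $S_s=\{(a,b)\in\mathbb Z_{\ge0}^2:a\le b,\ 2^sc_{\min}\le c_{\mathrm{rew}}2^b+c_{\mathrm{ver}}2^{b-a}<2^{s+1}c_{\min}\}$; for nonempty $S_s$ let $b^\star_s=\max\{b:(a,b)\in S_s\}$, $j^\star_s=\max\{b-a:(a,b)\in S_s\}$, $m_s=\lceil2^{b^\star_s+1}\rceil$ and $k_s=\lceil6\cdot2^{j^\star_s}\rceil$. Fix a threshold $t$ with $q_t>0$ and $s_t>0$, let $(a,b)$ be its dyadic pair, and let $s_\star$ be the shell with $(a,b)\in S_{s_\star}$. Then for every integer $u\ge0$, $(a,b+u)\in S_{s_\star+u}$; consequently \[ m_{s_\star+u}\ge\lceil2^{b+u+1}\rceil,\qquad k_{s_\star+u}\ge\lceil6\cdot2^{b-a+u}\rceil. \]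
   Context: Here $R\sim\mathcal D$ for a distribution $\mathcal D$ on $\mathbb R$ and $V\in\{0,1\}$ with $\Pr(V=1\mid R=r)=h^\star(r)$; $q_t=\Pr(R\ge t)$ and $s_t=\Pr(R\ge t,V=1)$. The dyadic pair of $t$ is the pair of integers $(a,b)$ with $a,b\ge0$, $2^{-a-1}<q_t\le2^{-a}$ and $2^{-b}\le s_t<2^{-b+1}$ (it satisfies $a\le b$). *)

theory Defs
  imports "HOL-Probability.Probability"
begin

text \<open>Joint law of (R,V) is a probability measure M on real \<times> bool.
  q_t = Pr(R \<ge> t), s_t = Pr(R \<ge> t, V = 1).\<close>

definition q_thr :: "(real \<times> bool) measure \<Rightarrow> real \<Rightarrow> real" where
  "q_thr M t = measure M {p. fst p \<ge> t}"

definition s_thr :: "(real \<times> bool) measure \<Rightarrow> real \<Rightarrow> real" where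
  "s_thr M t = measure M {p. fst p \<ge> t \<and> snd p}"

definition dyadic_pair :: "real \<Rightarrow> real \<Rightarrow> nat \<Rightarrow> nat \<Rightarrow> bool" where
  "dyadic_pair q s a b \<longleftrightarrow>
     (1/2) ^ (a + 1) < q \<and> q \<le> (1/2) ^ a \<and>
     (1/2) ^ b \<le> s \<and> s < 2 * (1/2) ^ b"

definition cmin :: "real \<Rightarrow> real \<Rightarrow> real" where
  "cmin crew cver = min crew cver"

definition shell :: "real \<Rightarrow> real \<Rightarrow> nat \<Rightarrow> (nat \<times> nat) set" where
  "shell crew cver s = {(a, b). a \<le> b \<and>
      2 ^ s * cmin crew cver \<le> crew * 2 ^ b + cver * 2 ^ (b - a) \<and>
      crew * 2 ^ b + cver * 2 ^ (b - a) < 2 ^ (s + 1) * cmin crew cver}"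

definition bstar :: "real \<Rightarrow> real \<Rightarrow> nat \<Rightarrow> nat" where
  "bstar crew cver s = Max (snd ` shell crew cver s)"

definition jstar :: "real \<Rightarrow> real \<Rightarrow> nat \<Rightarrow> nat" where
  "jstar crew cver s = Max ((\<lambda>(a, b). b - a) ` shell crew cver s)"

definition m_shell :: "real \<Rightarrow> real \<Rightarrow> nat \<Rightarrow> int" where
  "m_shell crew cver s = \<lceil>(2::real) ^ (bstar crew cver s + 1)\<rceil>"

definition k_shell :: "real \<Rightarrow> real \<Rightarrow> nat \<Rightarrow> int" where
  "k_shell crew cver s = \<lceil>6 * (2::real) ^ (jstar crew cver s)\<rceil>"

end

theory Submission
  imports Defs
begin

text \<open>Multiplying by \<open>2 ^ u\<close> maps the \<open>s\<close>-th dyadic shell of the cost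
  \<open>crew * 2 ^ b + cver * 2 ^ (b - a)\<close> onto the \<open>(s + u)\<close>-th one, and raising \<open>b\<close> by \<open>u\<close>
  (with \<open>a\<close> fixed) multiplies the cost by exactly \<open>2 ^ u\<close>. Since shells are finite,
  the witness \<open>(a, b + u)\<close> bounds the maxima \<open>bstar\<close> and \<open>jstar\<close> from below.\<close>

lemma shell_subset_atMost:
  assumes "crew > 0" "cver \<ge> 0"
  shows "shell crew cver s \<subseteq> {..s} \<times> {..s}"
proof
  fix p assume p: "p \<in> shell crew cver s"
  obtain x y where p_eq: "p = (x, y)" by (cases p)
  have "x \<le> y" and upper: "crew * 2 ^ y + cver * 2 ^ (y - x) < 2 ^ (s + 1) * cmin crew cver"
    using p p_eq by (auto simp: shell_def)
  moreover have "2 ^ (s + 1) * cmin crew cver \<le> 2 ^ (s + 1) * crew"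
    by (simp add: cmin_def)
  ultimately have "crew * 2 ^ y < crew * 2 ^ (s + 1)"
    using assms(2) by (smt (verit) mult.commute zero_le_power mult_nonneg_nonneg)
  then have "y < s + 1"
    using assms(1) power_less_imp_less_exp[of "2::real" y "s + 1"] by simp
  then show "p \<in> {..s} \<times> {..s}" using \<open>x \<le> y\<close> p_eq by auto
qed

lemma finite_shell:
  assumes "crew > 0" "cver \<ge> 0"
  shows "finite (shell crew cver s)"
  using finite_subset[OF shell_subset_atMost[OF assms]] by simp

lemma shell_cost_shift:
  fixes crew cver :: real
  assumes "a \<le> b"
  shows "crew * 2 ^ (b + u) + cver * 2 ^ (b + u - a) = 2 ^ u * (crew * 2 ^ b + cver * 2 ^ (b - a))"
proof -
  have "b + u - a = (b - a) + u" using assms by simp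
  then show ?thesis by (simp add: power_add algebra_simps)
qed

lemma shell_shift:
  assumes "(a, b) \<in> shell crew cver s"
  shows "(a, b + u) \<in> shell crew cver (s + u)"
proof -
  have "a \<le> b"
    and lower: "2 ^ s * cmin crew cver \<le> crew * 2 ^ b + cver * 2 ^ (b - a)"
    and upper: "crew * 2 ^ b + cver * 2 ^ (b - a) < 2 ^ (s + 1) * cmin crew cver"
    using assms by (auto simp: shell_def)
  have pos: "(0::real) < 2 ^ u" by simp
  have "2 ^ (s + u) * cmin crew cver \<le> crew * 2 ^ (b + u) + cver * 2 ^ (b + u - a)"
    unfolding shell_cost_shift[OF \<open>a \<le> b\<close>]
    using mult_left_mono[OF lower less_imp_le[OF pos]] by (simp add: power_add mult_ac)
  moreover have "crew * 2 ^ (b + u) + cver * 2 ^ (b + u - a) < 2 ^ (s + u + 1) * cmin crew cver"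
    unfolding shell_cost_shift[OF \<open>a \<le> b\<close>]
    using mult_strict_left_mono[OF upper pos] by (simp add: power_add mult_ac)
  ultimately show ?thesis using \<open>a \<le> b\<close> by (simp add: shell_def)
qed

lemma m_shell_ge:
  assumes "crew > 0" "cver \<ge> 0" "(a, b) \<in> shell crew cver s"
  shows "\<lceil>(2::real) ^ (b + 1)\<rceil> \<le> m_shell crew cver s"
proof -
  have "b \<le> bstar crew cver s"
    unfolding bstar_def
    using assms(3) finite_shell[OF assms(1,2)] by (force intro: Max_ge)
  then show ?thesis
    unfolding m_shell_def by (intro ceiling_mono power_increasing) simp_all
qed

lemma k_shell_ge:
  assumes "crew > 0" "cver \<ge> 0" "(a, b) \<in> shell crew cver s"
  shows "\<lceil>6 * (2::real) ^ (b - a)\<rceil> \<le> k_shell crew cver s"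
proof -
  have "b - a \<le> jstar crew cver s"
    unfolding jstar_def
    using assms(3) finite_shell[OF assms(1,2)] by (force intro: Max_ge)
  then show ?thesis
    unfolding k_shell_def by (intro ceiling_mono mult_left_mono power_increasing) simp_all
qed

theorem lemma6:
  fixes M :: "(real \<times> bool) measure" and crew cver t :: real
    and a b sstar :: nat
  assumes "prob_space M"
    and "sets M = sets (borel \<Otimes>\<^sub>M count_space UNIV)"
    and "crew > 0" and "cver > 0"
    and "q_thr M t > 0" and "s_thr M t > 0"
    and "dyadic_pair (q_thr M t) (s_thr M t) a b"
    and "(a, b) \<in> shell crew cver sstar"
  shows "\<forall>u::nat. (a, b + u) \<in> shell crew cver (sstar + u) \<and>
           m_shell crew cver (sstar + u) \<ge> \<lceil>(2::real) ^ (b + u + 1)\<rceil> \<and>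
           k_shell crew cver (sstar + u) \<ge> \<lceil>6 * (2::real) ^ (b - a + u)\<rceil>"
proof
  fix u :: nat
  have shifted: "(a, b + u) \<in> shell crew cver (sstar + u)"
    using assms(8) by (rule shell_shift)
  have "a \<le> b" using assms(8) by (simp add: shell_def)
  then have "b - a + u = b + u - a" by simp
  then show "(a, b + u) \<in> shell crew cver (sstar + u) \<and>
           m_shell crew cver (sstar + u) \<ge> \<lceil>(2::real) ^ (b + u + 1)\<rceil> \<and>
           k_shell crew cver (sstar + u) \<ge> \<lceil>6 * (2::real) ^ (b - a + u)\<rceil>"
    using shifted m_shell_ge[OF assms(3) _ shifted] k_shell_ge[OF assms(3) _ shifted] assms(4)
    by simp
qed

end
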